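(* Let $E$ be a finite set and $\mathcal{A}$ a set-arrangement on $E$, with local Lie algebras $L_A=\mathcal{F}(A)/\langle R_A\rangle$, $R_A\subseteq[\mathcal{F}(A),\mathcal{F}(A)]$, for $A\in\mathcal{A}$, and let $\mathcal{L}=\mathcal{F}(E)/\langle R\rangle$ with $$R=\bigcup_{A\in\mathcal{A}}R_A\ \cup\ \{[x,y]:\ x,y\in E,\ \{x,y\}\not\subseteq A \text{ for every } A\in\mathcal{A}\}.$$ Assume $\mathcal{L}$ satisfies replacement. Let $\mathcal{B}_1,\dots,\mathcal{B}_k$ be pairwise disjoint subsets of $\mathcal{A}$, each closed in $\mathcal{A}$, with $\bigcup_{i=1}^k\mathcal{B}_i=\mathcal{A}$. For each $i$ let $\pi_{\mathcal{B}_i}:\mathcal{L}\to L_{\mathcal{B}_i}$ be the Lie homomorphism sending the elements of $E\setminus\mathrm{supp}(\mathcal{B}_i)$ to $0$ and fixing those of $\mathrm{supp}(\mathcal{B}_i)$, let $I_{\mathcal{B}_i}=\ker\pi_{\mathcal{B}_i}$, and let $J$ be the kernel of the surjective Lie homomorphism $\bigoplus_{i=1}^k\pi'_{\mathcal{B}_i}:\mathcal{L}'\to\bigoplus_{i=1}^kL'_{\mathcal{B}_i}$, where $\pi'_{\mathcal{B}_i}$ is the restriction of $\pi_{\mathcal{B}_i}$ to $\mathcal{L}'$. Then: (1) $J$ is generated as an ideal of $\mathcal{L}$ by the elements $[x,[y,z]]$ with $y,z\in\mathrm{supp}(\mathcal{B}_i)$, $x\in E\setminus\mathrm{supp}(\mathcal{B}_i)$,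 $i=1,\dots,k$; (2) $J=0$ if and only if $[x,[y,z]]=0$ in $\mathcal{L}$ for all $y,z\in\mathrm{supp}(\mathcal{B}_i)$, $x\in E\setminus\mathrm{supp}(\mathcal{B}_i)$, $i=1,\dots,k$; (3) for each $i=1,\dots,k$, $I_{\mathcal{B}_i}$ equals the Lie subalgebra of $\mathcal{L}$ generated by $E\setminus\mathrm{supp}(\mathcal{B}_i)$.
   Context: All Lie algebras are over a fixed field; $\mathcal{F}(X)$ is the free Lie algebra on $X$, $\langle S\rangle$ the ideal generated by $S$, and $M'=[M,M]$ the derived algebra. A set-arrangement on a finite set $E$ is a set $\mathcal{A}$ of subsets of $E$ with $|A|\ge3$ for all $A\in\mathcal{A}$ and $|A\cap B|\le1$ for distinct $A,B\in\mathcal{A}$. $\mathcal{L}$ satisfies replacement if for every $A\in\mathcal{A}$ and every $x\in A$ that also lies in some $B\in\mathcal{A}$ with $B\ne A$, one has $L_A'\subseteq$ the Lie subalgebra of $L_A$ generated by $A\setminus\{x\}$. For $\mathcal{B}\subseteq\mathcal{A}$ put $\mathrm{supp}(\mathcal{B})=\bigcup_{B\in\mathcal{B}}B$; $\mathcal{B}$ is closed in $\mathcal{A}$ if $|A\cap\mathrm{supp}(\mathcal{B})|\le1$ for all $A\in\mathcal{A}\setminus\mathcal{B}$. For such $\mathcal{B}$, $L_{\mathcal{B}}=\mathcal{F}(\mathrm{supp}(\mathcal{B}))/\langle R_{\mathcal{B}}\rangle$ where $R_{\mathcal{B}}=\bigcup_{B\in\mathcal{B}}R_B\cup\{[x,y]:\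 x,y\in\mathrm{supp}(\mathcal{B}),\ \{x,y\}\not\subseteq B\text{ for all }B\in\mathcal{B}\}$. Elements of $E$ are identified with their images in $\mathcal{L}$. *)

theory Defs
  imports Main
begin

text \<open>Elements of the finitely presented
Lie algebra F(X)/<R> are represented by terms with variables in X, modulo the congruence
lie_cong R generated by the Lie algebra axioms and the relations r = 0 for r in R.\<close>

datatype ('k, 'x) lterm =
    LV 'x
  | LZero
  | LAdd "('k, 'x) lterm" "('k, 'x) lterm"
  | LSmul 'k "('k, 'x) lterm"
  | LBr "('k, 'x) lterm" "('k, 'x) lterm"

fun lvars :: "('k, 'x) lterm \<Rightarrow> 'x set" where
  "lvars (LV x) = {x}"
| "lvars LZero = {}"
| "lvars (LAdd s t) = lvars s \<union> lvars t"
| "lvars (LSmul a t) = lvars t"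
| "lvars (LBr s t) = lvars s \<union> lvars t"

inductive lie_cong :: "('k::field, 'x) lterm set \<Rightarrow> ('k, 'x) lterm \<Rightarrow> ('k, 'x) lterm \<Rightarrow> bool"
  for R :: "('k, 'x) lterm set" where
  refl: "lie_cong R t t"
| sym: "lie_cong R s t \<Longrightarrow> lie_cong R t s"
| trans: "lie_cong R s t \<Longrightarrow> lie_cong R t u \<Longrightarrow> lie_cong R s u"
| cong_add: "lie_cong R s s' \<Longrightarrow> lie_cong R t t' \<Longrightarrow> lie_cong R (LAdd s t) (LAdd s' t')"
| cong_smul: "lie_cong R t t' \<Longrightarrow> lie_cong R (LSmul a t) (LSmul a t')"
| cong_br: "lie_cong R s s' \<Longrightarrow> lie_cong R t t' \<Longrightarrow> lie_cong R (LBr s t) (LBr s' t')"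
| add_assoc: "lie_cong R (LAdd (LAdd s t) u) (LAdd s (LAdd t u))"
| add_comm: "lie_cong R (LAdd s t) (LAdd t s)"
| add_zero: "lie_cong R (LAdd t LZero) t"
| add_neg: "lie_cong R (LAdd t (LSmul (-1) t)) LZero"
| smul_smul: "lie_cong R (LSmul a (LSmul b t)) (LSmul (a * b) t)"
| smul_one: "lie_cong R (LSmul 1 t) t"
| smul_add: "lie_cong R (LSmul a (LAdd s t)) (LAdd (LSmul a s) (LSmul a t))"
| add_smul: "lie_cong R (LSmul (a + b) t) (LAdd (LSmul a t) (LSmul b t))"
| br_add_left: "lie_cong R (LBr (LAdd s t) u) (LAdd (LBr s u) (LBr t u))"
| br_add_right: "lie_cong R (LBr s (LAdd t u)) (LAdd (LBr s t) (LBr s u))"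
| br_smul_left: "lie_cong R (LBr (LSmul a s) t) (LSmul a (LBr s t))"
| br_smul_right: "lie_cong R (LBr s (LSmul a t)) (LSmul a (LBr s t))"
| br_alt: "lie_cong R (LBr t t) LZero"
| jacobi: "lie_cong R (LAdd (LBr x (LBr y z)) (LAdd (LBr y (LBr z x)) (LBr z (LBr x y)))) LZero"
| rel: "r \<in> R \<Longrightarrow> lie_cong R r LZero"

fun killout :: "'x set \<Rightarrow> ('k, 'x) lterm \<Rightarrow> ('k, 'x) lterm" where
  "killout S (LV x) = (if x \<in> S then LV x else LZero)"
| "killout S LZero = LZero"
| "killout S (LAdd s t) = LAdd (killout S s) (killout S t)"
| "killout S (LSmul a t) = LSmul a (killout S t)"
| "killout S (LBr s t) = LBr (killout S s) (killout S t)"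

text \<open>Linear span of brackets of terms over X (represents [F(X),F(X)]).\<close>
inductive_set brspan :: "'x set \<Rightarrow> ('k, 'x) lterm set" for X where
  "lvars s \<subseteq> X \<Longrightarrow> lvars t \<subseteq> X \<Longrightarrow> LBr s t \<in> brspan X"
| "LZero \<in> brspan X"
| "s \<in> brspan X \<Longrightarrow> t \<in> brspan X \<Longrightarrow> LAdd s t \<in> brspan X"
| "t \<in> brspan X \<Longrightarrow> LSmul a t \<in> brspan X"

definition derived :: "('k::field, 'x) lterm set \<Rightarrow> 'x set \<Rightarrow> ('k, 'x) lterm set" where
  "derived R X = {t. lvars t \<subseteq> X \<and> (\<exists>s \<in> brspan X. lie_cong R t s)}"

definition subalg_gen :: "('k::field, 'x) lterm set \<Rightarrow> 'x set \<Rightarrow> 'x set \<Rightarrow> ('k, 'x) lterm set" where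
  "subalg_gen R X Y = {t. lvars t \<subseteq> X \<and> (\<exists>s. lvars s \<subseteq> Y \<and> lie_cong R t s)}"

inductive_set idspan :: "'x set \<Rightarrow> ('k, 'x) lterm set \<Rightarrow> ('k, 'x) lterm set" for X G where
  "g \<in> G \<Longrightarrow> g \<in> idspan X G"
| "LZero \<in> idspan X G"
| "s \<in> idspan X G \<Longrightarrow> t \<in> idspan X G \<Longrightarrow> LAdd s t \<in> idspan X G"
| "t \<in> idspan X G \<Longrightarrow> LSmul a t \<in> idspan X G"
| "lvars u \<subseteq> X \<Longrightarrow> s \<in> idspan X G \<Longrightarrow> LBr u s \<in> idspan X G"
| "lvars u \<subseteq> X \<Longrightarrow> s \<in> idspan X G \<Longrightarrow> LBr s u \<in> idspan X G"

definition ideal_gen :: "('k::field, 'x) lterm set \<Rightarrow> 'x set \<Rightarrow> ('k, 'x) lterm set \<Rightarrow> ('k, 'x) lterm set" where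
  "ideal_gen R X G = {t. lvars t \<subseteq> X \<and> (\<exists>s \<in> idspan X G. lie_cong R t s)}"

definition set_arrangement :: "'x set \<Rightarrow> 'x set set \<Rightarrow> bool" where
  "set_arrangement E \<A> \<longleftrightarrow> (\<forall>A\<in>\<A>. A \<subseteq> E \<and> card A \<ge> 3) \<and>
     (\<forall>A\<in>\<A>. \<forall>B\<in>\<A>. A \<noteq> B \<longrightarrow> card (A \<inter> B) \<le> 1)"

definition supp :: "'x set set \<Rightarrow> 'x set" where
  "supp \<B> = \<Union>\<B>"

definition closed_in_arr :: "'x set set \<Rightarrow> 'x set set \<Rightarrow> bool" where
  "closed_in_arr \<B> \<A> \<longleftrightarrow> \<B> \<subseteq> \<A> \<and> (\<forall>A \<in> \<A> - \<B>. card (A \<inter> supp \<B>) \<le> 1)"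

definition pres_rels :: "'x set \<Rightarrow> 'x set set \<Rightarrow> ('x set \<Rightarrow> ('k, 'x) lterm set) \<Rightarrow> ('k, 'x) lterm set" where
  "pres_rels X \<B> RA = (\<Union>B\<in>\<B>. RA B) \<union>
     {LBr (LV x) (LV y) | x y. x \<in> X \<and> y \<in> X \<and> (\<forall>B\<in>\<B>. \<not> {x, y} \<subseteq> B)}"

definition replacement :: "'x set set \<Rightarrow> ('x set \<Rightarrow> ('k::field, 'x) lterm set) \<Rightarrow> bool" where
  "replacement \<A> RA \<longleftrightarrow> (\<forall>A\<in>\<A>. \<forall>x\<in>A. (\<exists>B\<in>\<A>. B \<noteq> A \<and> x \<in> B) \<longrightarrow>
      derived (RA A) A \<subseteq> subalg_gen (RA A) A (A - {x}))"

definition proj_kernel :: "'x set \<Rightarrow> ('x set \<Rightarrow> ('k::field, 'x) lterm set) \<Rightarrow> 'x set set \<Rightarrow> ('k, 'x) lterm set" where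
  "proj_kernel E RA \<B> = {t. lvars t \<subseteq> E \<and>
     lie_cong (pres_rels (supp \<B>) \<B> RA) (killout (supp \<B>) t) LZero}"

end

(* For a closed subfamily B let N be the subalgebra generated by E - supp B.  If x lies outside
   and y inside supp B, then either [x, y] is a defining relation or x and y lie in a common
   member A outside B; there replacement rewrites [x, y] in L_A without y, and the remaining
   generators of A avoid supp B, since A meets supp B only in y.  Thus ad y maps N into itself for
   every y, so N is an ideal, and modulo N every element agrees with its image under pi_B.  Hence
   ker pi_B = N, which is (3).

   For (1), let I be the ideal generated by the triples [x, [y, z]].  As N_i is an ideal,
   [x, L'_{B_i}] lies in I for x outside supp B_i, so the sum of the L'_{B_i} and I is an ideal;
   it contains every bracket of two generators and is therefore all of L'.  Since the relations of
   L_{B_i} hold in L, the sum of the maps pi_{B_i} can be read as an endomorphism of L; it fixes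
   each L'_{B_i} (distinct supports share only commuting generators) and kills I.  So
   t = sum_i pi_{B_i}(t) modulo I for every t in L', and for t in J the sum vanishes. *)

theory Submission
  imports Defs
begin

section \<open>Identities modulo Lie relations\<close>

declare lie_cong.trans [trans]

lemma lie_cong_LZero_add: "lie_cong R (LAdd LZero t) t"
  using lie_cong.add_comm lie_cong.add_zero by (rule lie_cong.trans)

lemma lie_cong_smul_zero: "lie_cong R (LSmul 0 t) LZero"
proof -
  have "lie_cong R (LSmul (1 + -1) t) (LAdd (LSmul 1 t) (LSmul (-1) t))"
    by (rule lie_cong.add_smul)
  also have "lie_cong R \<dots> (LAdd t (LSmul (-1) t))"
    by (intro lie_cong.cong_add lie_cong.smul_one lie_cong.refl)
  also have "lie_cong R \<dots> LZero"
    by (rule lie_cong.add_neg)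
  finally show ?thesis by simp
qed

lemma lie_cong_LAdd_LZeroI:
  "lie_cong R a LZero \<Longrightarrow> lie_cong R b LZero \<Longrightarrow> lie_cong R (LAdd a b) LZero"
  using lie_cong.cong_add lie_cong.add_zero by (rule lie_cong.trans)

lemma lie_cong_LSmul_LZeroI:
  assumes "lie_cong R a LZero"
  shows "lie_cong R (LSmul c a) LZero"
proof -
  have "lie_cong R (LSmul c a) (LSmul c (LSmul 0 LZero))"
    using assms lie_cong.sym[OF lie_cong_smul_zero] by (blast intro: lie_cong.cong_smul lie_cong.trans)
  also have "lie_cong R \<dots> (LSmul 0 LZero)"
    using lie_cong.smul_smul[of R c 0 LZero] by simp
  also have "lie_cong R \<dots> LZero"
    by (rule lie_cong_smul_zero)
  finally show ?thesis .
qed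

lemma lie_cong_LBr_LZeroI_left:
  assumes "lie_cong R a LZero"
  shows "lie_cong R (LBr a b) LZero"
proof -
  have "lie_cong R (LBr a b) (LBr (LSmul 0 a) b)"
    using assms lie_cong.sym[OF lie_cong_smul_zero]
    by (blast intro: lie_cong.cong_br lie_cong.trans lie_cong.refl)
  also have "lie_cong R \<dots> (LSmul 0 (LBr a b))"
    by (rule lie_cong.br_smul_left)
  also have "lie_cong R \<dots> LZero"
    by (rule lie_cong_smul_zero)
  finally show ?thesis .
qed

lemma lie_cong_LBr_LZeroI_right:
  assumes "lie_cong R b LZero"
  shows "lie_cong R (LBr a b) LZero"
proof -
  have "lie_cong R (LBr a b) (LBr a (LSmul 0 b))"
    using assms lie_cong.sym[OF lie_cong_smul_zero]
    by (blast intro: lie_cong.cong_br lie_cong.trans lie_cong.refl)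
  also have "lie_cong R \<dots> (LSmul 0 (LBr a b))"
    by (rule lie_cong.br_smul_right)
  also have "lie_cong R \<dots> LZero"
    by (rule lie_cong_smul_zero)
  finally show ?thesis .
qed

lemma lie_cong_neg_if_add_zero:
  assumes "lie_cong R (LAdd u v) LZero"
  shows "lie_cong R u (LSmul (-1) v)"
proof -
  have "lie_cong R u (LAdd u (LAdd v (LSmul (-1) v)))"
    by (meson lie_cong.add_neg lie_cong.add_zero lie_cong.cong_add lie_cong.refl lie_cong.sym
        lie_cong.trans)
  also have "lie_cong R \<dots> (LAdd (LAdd u v) (LSmul (-1) v))"
    by (rule lie_cong.sym[OF lie_cong.add_assoc])
  also have "lie_cong R \<dots> (LAdd LZero (LSmul (-1) v))"
    by (intro lie_cong.cong_add assms lie_cong.refl)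
  also have "lie_cong R \<dots> (LSmul (-1) v)"
    by (rule lie_cong_LZero_add)
  finally show ?thesis .
qed

lemma lie_cong_br_antisym: "lie_cong R (LBr a b) (LSmul (-1) (LBr b a))"
proof (rule lie_cong_neg_if_add_zero)
  have "lie_cong R (LAdd (LBr a b) (LBr b a)) (LAdd (LAdd (LBr a a) (LBr a b)) (LAdd (LBr b a) (LBr b b)))"
    by (meson lie_cong.add_zero lie_cong_LZero_add lie_cong.br_alt lie_cong.cong_add lie_cong.refl
        lie_cong.sym lie_cong.trans)
  also have "lie_cong R \<dots> (LAdd (LBr a (LAdd a b)) (LBr b (LAdd a b)))"
    by (intro lie_cong.cong_add lie_cong.sym[OF lie_cong.br_add_right])
  also have "lie_cong R \<dots> (LBr (LAdd a b) (LAdd a b))"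
    by (rule lie_cong.sym[OF lie_cong.br_add_left])
  also have "lie_cong R \<dots> LZero"
    by (rule lie_cong.br_alt)
  finally show "lie_cong R (LAdd (LBr a b) (LBr b a)) LZero" .
qed

lemma lie_cong_br_leibniz:
  "lie_cong R (LBr x (LBr y z)) (LAdd (LBr (LBr x y) z) (LBr y (LBr x z)))"
proof -
  have "lie_cong R (LBr x (LBr y z)) (LSmul (-1) (LAdd (LBr y (LBr z x)) (LBr z (LBr x y))))"
    by (intro lie_cong_neg_if_add_zero lie_cong.jacobi)
  also have "lie_cong R \<dots> (LAdd (LSmul (-1) (LBr y (LBr z x))) (LSmul (-1) (LBr z (LBr x y))))"
    by (rule lie_cong.smul_add)
  also have "lie_cong R \<dots> (LAdd (LBr y (LSmul (-1) (LBr z x))) (LBr (LBr x y) z))"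
    by (intro lie_cong.cong_add lie_cong.sym[OF lie_cong.br_smul_right]
        lie_cong.sym[OF lie_cong_br_antisym])
  also have "lie_cong R \<dots> (LAdd (LBr y (LBr x z)) (LBr (LBr x y) z))"
    by (intro lie_cong.cong_add lie_cong.cong_br lie_cong.refl lie_cong.sym[OF lie_cong_br_antisym])
  also have "lie_cong R \<dots> (LAdd (LBr (LBr x y) z) (LBr y (LBr x z)))"
    by (rule lie_cong.add_comm)
  finally show ?thesis .
qed

lemma lie_cong_br_br_left:
  "lie_cong R (LBr (LBr a b) c) (LAdd (LBr a (LBr b c)) (LSmul (-1) (LBr b (LBr a c))))"
proof -
  let ?u = "LBr (LBr a b) c" and ?v = "LBr b (LBr a c)"
  have "lie_cong R ?u (LAdd ?u (LAdd ?v (LSmul (-1) ?v)))"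
    by (meson lie_cong.add_neg lie_cong.add_zero lie_cong.cong_add lie_cong.refl lie_cong.sym
        lie_cong.trans)
  also have "lie_cong R \<dots> (LAdd (LAdd ?u ?v) (LSmul (-1) ?v))"
    by (rule lie_cong.sym[OF lie_cong.add_assoc])
  also have "lie_cong R \<dots> (LAdd (LBr a (LBr b c)) (LSmul (-1) ?v))"
    by (intro lie_cong.cong_add lie_cong.refl lie_cong.sym[OF lie_cong_br_leibniz])
  finally show ?thesis .
qed

lemma lie_cong_add_add_swap:
  "lie_cong R (LAdd (LAdd a b) (LAdd c d)) (LAdd (LAdd a c) (LAdd b d))"
proof -
  have "lie_cong R (LAdd (LAdd a b) (LAdd c d)) (LAdd a (LAdd (LAdd b c) d))"
    by (meson lie_cong.add_assoc lie_cong.cong_add lie_cong.refl lie_cong.sym lie_cong.trans)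
  also have "lie_cong R \<dots> (LAdd a (LAdd (LAdd c b) d))"
    by (intro lie_cong.cong_add lie_cong.add_comm lie_cong.refl)
  also have "lie_cong R \<dots> (LAdd (LAdd a c) (LAdd b d))"
    by (meson lie_cong.add_assoc lie_cong.cong_add lie_cong.refl lie_cong.sym lie_cong.trans)
  finally show ?thesis .
qed

lemma lie_cong_mono:
  assumes "\<And>r. r \<in> R1 \<Longrightarrow> lie_cong R2 r LZero" and "lie_cong R1 a b"
  shows "lie_cong R2 a b"
  using assms(2)
proof (induction rule: lie_cong.induct)
  case (rel r)
  then show ?case by (rule assms(1))
qed (rule lie_cong.intros; assumption)+

lemma lie_cong_LZero_if_lvars_empty: "lvars t = {} \<Longrightarrow> lie_cong R t LZero"
  by (induction t) (auto intro: lie_cong.refl lie_cong_LAdd_LZeroI lie_cong_LSmul_LZeroI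
      lie_cong_LBr_LZeroI_left)

section \<open>Killing generators\<close>

lemma killout_id: "lvars t \<subseteq> S \<Longrightarrow> killout S t = t"
  by (induction t) auto

lemma lvars_killout: "lvars (killout S t) \<subseteq> lvars t \<inter> S"
  by (induction t) auto

lemma killout_lie_cong:
  assumes "\<And>r. r \<in> R1 \<Longrightarrow> lie_cong R2 (killout S r) LZero" and "lie_cong R1 a b"
  shows "lie_cong R2 (killout S a) (killout S b)"
  using assms(2)
proof (induction rule: lie_cong.induct)
  case (rel r)
  then show ?case using assms(1) by simp
qed ((simp only: killout.simps)?, (rule lie_cong.intros; assumption))+

lemma killout_LZero_if_disjoint: "lvars t \<inter> S = {} \<Longrightarrow> lie_cong R (killout S t) LZero"
  using lvars_killout[of S t] by (intro lie_cong_LZero_if_lvars_empty) blast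

lemma lvars_brspan: "t \<in> brspan V \<Longrightarrow> lvars t \<subseteq> V"
  by (induction rule: brspan.induct) auto

lemma killout_brspan: "t \<in> brspan V \<Longrightarrow> killout S t \<in> brspan (V \<inter> S)"
proof (induction rule: brspan.induct)
  case (1 s t)
  then show ?case using lvars_killout[of S s] lvars_killout[of S t]
    by (auto intro!: brspan.intros)
qed (auto intro: brspan.intros)

lemma lvars_idspan:
  assumes "\<And>g. g \<in> G \<Longrightarrow> lvars g \<subseteq> X"
  shows "t \<in> idspan X G \<Longrightarrow> lvars t \<subseteq> X"
  by (induction rule: idspan.induct) (auto dest: assms)

lemma idspan_subset_brspan:
  assumes "G \<subseteq> brspan X"
  shows "idspan X G \<subseteq> brspan X"
proof
  fix t assume "t \<in> idspan X G"
  then show "t \<in> brspan X"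
  proof (induction rule: idspan.induct)
    case (5 u s)
    then show ?case using lvars_idspan[OF _ 5(2)] assms lvars_brspan by (blast intro: brspan.intros)
  next
    case (6 u s)
    then show ?case using lvars_idspan[OF _ 6(2)] assms lvars_brspan by (blast intro: brspan.intros)
  qed (use assms in \<open>auto intro: brspan.intros\<close>)
qed

lemma killout_idspan: "t \<in> idspan X G \<Longrightarrow> killout S t \<in> idspan X (killout S ` G)"
  by (induction rule: idspan.induct)
    (auto intro: idspan.intros(1-4) idspan.intros(5,6)[OF subset_trans[OF lvars_killout]])

lemma idspan_LZero:
  assumes "\<And>g. g \<in> G \<Longrightarrow> lie_cong R g LZero"
  shows "t \<in> idspan X G \<Longrightarrow> lie_cong R t LZero"
  by (induction rule: idspan.induct) (auto intro: assms lie_cong.refl lie_cong_LAdd_LZeroI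
      lie_cong_LSmul_LZeroI lie_cong_LBr_LZeroI_left lie_cong_LBr_LZeroI_right)

section \<open>Subspaces and ad-stable subspaces\<close>

definition term_subspace :: "('k::field, 'x) lterm set \<Rightarrow> bool" where
  "term_subspace M \<longleftrightarrow> LZero \<in> M \<and> (\<forall>a\<in>M. \<forall>b\<in>M. LAdd a b \<in> M) \<and> (\<forall>c a. a \<in> M \<longrightarrow> LSmul c a \<in> M)"

text \<open>Subspaces of the quotient algebra, represented by their full preimages in the term algebra.\<close>

definition cong_subspace :: "('k::field, 'x) lterm set \<Rightarrow> ('k, 'x) lterm set \<Rightarrow> bool" where
  "cong_subspace R C \<longleftrightarrow> term_subspace C \<and> (\<forall>a b. lie_cong R a b \<longrightarrow> b \<in> C \<longrightarrow> a \<in> C)"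

definition cong_closure :: "('k::field, 'x) lterm set \<Rightarrow> ('k, 'x) lterm set \<Rightarrow> ('k, 'x) lterm set" where
  "cong_closure R M = {t. \<exists>s\<in>M. lie_cong R t s}"

inductive_set lspan :: "('k::field, 'x) lterm set \<Rightarrow> ('k, 'x) lterm set" for G where
  gen: "g \<in> G \<Longrightarrow> g \<in> lspan G"
| zero: "LZero \<in> lspan G"
| add: "a \<in> lspan G \<Longrightarrow> b \<in> lspan G \<Longrightarrow> LAdd a b \<in> lspan G"
| smul: "a \<in> lspan G \<Longrightarrow> LSmul c a \<in> lspan G"

lemma term_subspace_lvars: "term_subspace {t. lvars t \<subseteq> V}"
  unfolding term_subspace_def by auto

lemma term_subspace_idspan: "term_subspace (idspan X G)"
  unfolding term_subspace_def by (auto intro: idspan.intros)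

lemma term_subspace_lspan: "term_subspace (lspan G)"
  unfolding term_subspace_def by (auto intro: lspan.intros)

lemma term_subspace_if_cong_subspace: "cong_subspace R C \<Longrightarrow> term_subspace C"
  unfolding cong_subspace_def by blast

lemma cong_subspace_LZero: "cong_subspace R C \<Longrightarrow> LZero \<in> C"
  unfolding cong_subspace_def term_subspace_def by blast

lemma cong_subspace_LAdd: "cong_subspace R C \<Longrightarrow> a \<in> C \<Longrightarrow> b \<in> C \<Longrightarrow> LAdd a b \<in> C"
  unfolding cong_subspace_def term_subspace_def by blast

lemma cong_subspace_LSmul: "cong_subspace R C \<Longrightarrow> a \<in> C \<Longrightarrow> LSmul c a \<in> C"
  unfolding cong_subspace_def term_subspace_def by blast

lemma cong_subspace_cong: "cong_subspace R C \<Longrightarrow> lie_cong R a b \<Longrightarrow> b \<in> C \<Longrightarrow> a \<in> C"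
  unfolding cong_subspace_def by blast

lemma cong_subspace_diff:
  "cong_subspace R C \<Longrightarrow> a \<in> C \<Longrightarrow> b \<in> C \<Longrightarrow> LAdd a (LSmul (-1) b) \<in> C"
  by (intro cong_subspace_LAdd cong_subspace_LSmul)

lemma cong_subspace_cong_LZero: "cong_subspace R C \<Longrightarrow> lie_cong R a LZero \<Longrightarrow> a \<in> C"
  by (metis cong_subspace_cong cong_subspace_LZero)

lemma cong_subspace_br_antisym: "cong_subspace R C \<Longrightarrow> LBr b a \<in> C \<Longrightarrow> LBr a b \<in> C"
  by (metis cong_subspace_cong cong_subspace_LSmul lie_cong_br_antisym)

lemma cong_closureI: "lie_cong R t s \<Longrightarrow> s \<in> M \<Longrightarrow> t \<in> cong_closure R M"
  unfolding cong_closure_def by blast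

lemma cong_closureE:
  "t \<in> cong_closure R M \<Longrightarrow> (\<And>s. s \<in> M \<Longrightarrow> lie_cong R t s \<Longrightarrow> P) \<Longrightarrow> P"
  unfolding cong_closure_def by blast

lemma cong_closure_mono: "M \<subseteq> M' \<Longrightarrow> cong_closure R M \<subseteq> cong_closure R M'"
  unfolding cong_closure_def by blast

lemma subset_cong_closure: "M \<subseteq> cong_closure R M"
  by (auto intro: cong_closureI lie_cong.refl)

lemma cong_subspace_cong_closure:
  assumes "term_subspace M"
  shows "cong_subspace R (cong_closure R M)"
  using assms unfolding cong_subspace_def term_subspace_def cong_closure_def
  by (blast intro: lie_cong.refl lie_cong.cong_add lie_cong.cong_smul lie_cong.trans)

lemma cong_closure_lspan_least:
  assumes C: "cong_subspace R C" and "G \<subseteq> C"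
  shows "cong_closure R (lspan G) \<subseteq> C"
proof
  have "lspan G \<subseteq> C"
  proof
    fix s assume "s \<in> lspan G"
    then show "s \<in> C"
      by (induction rule: lspan.induct)
        (use assms in \<open>auto intro: cong_subspace_LZero cong_subspace_LAdd cong_subspace_LSmul\<close>)
  qed
  then show "t \<in> C" if "t \<in> cong_closure R (lspan G)" for t
    using that by (auto elim!: cong_closureE intro: cong_subspace_cong[OF C])
qed

lemma cong_subspace_br_left_preimage:
  assumes "cong_subspace R C"
  shows "cong_subspace R {u. \<forall>w\<in>W. LBr u w \<in> C}"
  using assms unfolding cong_subspace_def term_subspace_def
  by (blast intro: lie_cong.br_add_left lie_cong.br_smul_left lie_cong.cong_br lie_cong.refl
      lie_cong_LBr_LZeroI_left)

lemma cong_subspace_br_right_preimage: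
  assumes "cong_subspace R C"
  shows "cong_subspace R {u. \<forall>w\<in>W. LBr w u \<in> C}"
  using assms unfolding cong_subspace_def term_subspace_def
  by (blast intro: lie_cong.br_add_right lie_cong.br_smul_right lie_cong.cong_br lie_cong.refl
      lie_cong_LBr_LZeroI_right)

lemma term_subspace_induct:
  assumes "lvars t \<subseteq> V" and C: "term_subspace C"
    and "\<And>x. x \<in> V \<Longrightarrow> LV x \<in> C"
    and "\<And>a b. lvars a \<subseteq> V \<Longrightarrow> lvars b \<subseteq> V \<Longrightarrow> a \<in> C \<Longrightarrow> b \<in> C \<Longrightarrow> LBr a b \<in> C"
  shows "t \<in> C"
  using assms(1) by (induction t) (use assms(2-) in \<open>auto simp: term_subspace_def\<close>)

lemma brspan_subset:
  fixes C :: "('k::field, 'x) lterm set"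
  assumes "term_subspace C" and "\<And>a b. lvars a \<subseteq> V \<Longrightarrow> lvars b \<subseteq> V \<Longrightarrow> LBr a b \<in> C"
  shows "brspan V \<subseteq> C"
proof
  fix t :: "('k, 'x) lterm" assume "t \<in> brspan V"
  then show "t \<in> C"
    by (induction rule: brspan.induct) (use assms in \<open>auto simp: term_subspace_def\<close>)
qed

text \<open>For \<open>X = E\<close> these are the ideals of the algebra presented on \<open>E\<close>.\<close>

definition ad_stable :: "('k::field, 'x) lterm set \<Rightarrow> 'x set \<Rightarrow> ('k, 'x) lterm set \<Rightarrow> bool" where
  "ad_stable R X C \<longleftrightarrow> cong_subspace R C \<and> (\<forall>u c. lvars u \<subseteq> X \<longrightarrow> c \<in> C \<longrightarrow> LBr u c \<in> C)"

lemma br_left_mem_of_generators: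
  assumes C: "cong_subspace R C" and "C \<subseteq> W"
    and gen: "\<And>x w. x \<in> X \<Longrightarrow> w \<in> W \<Longrightarrow> LBr (LV x) w \<in> C"
    and "lvars u \<subseteq> X" and "w \<in> W"
  shows "LBr u w \<in> C"
proof -
  have "u \<in> {u. \<forall>w\<in>W. LBr u w \<in> C}"
    using \<open>lvars u \<subseteq> X\<close>
  proof (rule term_subspace_induct)
    show "term_subspace {u. \<forall>w\<in>W. LBr u w \<in> C}"
      using C by (intro term_subspace_if_cong_subspace cong_subspace_br_left_preimage)
  next
    fix x assume "x \<in> X"
    then show "LV x \<in> {u. \<forall>w\<in>W. LBr u w \<in> C}" using gen by blast
  next
    fix a b assume a: "a \<in> {u. \<forall>w\<in>W. LBr u w \<in> C}" and b: "b \<in> {u. \<forall>w\<in>W. LBr u w \<in> C}"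
    have "LBr (LBr a b) w \<in> C" if "w \<in> W" for w
    proof (rule cong_subspace_cong[OF C lie_cong_br_br_left], rule cong_subspace_diff[OF C])
      show "LBr a (LBr b w) \<in> C" "LBr b (LBr a w) \<in> C"
        using a b \<open>w \<in> W\<close> \<open>C \<subseteq> W\<close> by blast+
    qed
    then show "LBr a b \<in> {u. \<forall>w\<in>W. LBr u w \<in> C}" by blast
  qed
  then show ?thesis using \<open>w \<in> W\<close> by blast
qed

lemma ad_stableI:
  "cong_subspace R C \<Longrightarrow> (\<And>x c. x \<in> X \<Longrightarrow> c \<in> C \<Longrightarrow> LBr (LV x) c \<in> C) \<Longrightarrow> ad_stable R X C"
  unfolding ad_stable_def using br_left_mem_of_generators[where W = C] by blast

lemma ad_stable_cong_subspace: "ad_stable R X C \<Longrightarrow> cong_subspace R C"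
  unfolding ad_stable_def by blast

lemma ad_stable_br_left: "ad_stable R X C \<Longrightarrow> lvars u \<subseteq> X \<Longrightarrow> c \<in> C \<Longrightarrow> LBr u c \<in> C"
  unfolding ad_stable_def by blast

lemma ad_stable_br_right: "ad_stable R X C \<Longrightarrow> lvars u \<subseteq> X \<Longrightarrow> c \<in> C \<Longrightarrow> LBr c u \<in> C"
  by (meson ad_stable_br_left ad_stable_cong_subspace cong_subspace_br_antisym)

lemma br_right_mem_of_generators:
  assumes I: "ad_stable R X I"
    and gen: "\<And>x. x \<in> X \<Longrightarrow> LBr w (LV x) \<in> I" and "lvars b \<subseteq> X"
  shows "LBr w b \<in> I"
proof -
  note I' = ad_stable_cong_subspace[OF I]
  have "b \<in> {u. \<forall>w'\<in>{w}. LBr w' u \<in> I}"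
    using \<open>lvars b \<subseteq> X\<close>
  proof (rule term_subspace_induct)
    show "term_subspace {u. \<forall>w'\<in>{w}. LBr w' u \<in> I}"
      using I' by (intro term_subspace_if_cong_subspace cong_subspace_br_right_preimage)
  next
    fix x assume "x \<in> X"
    then show "LV x \<in> {u. \<forall>w'\<in>{w}. LBr w' u \<in> I}" using gen by blast
  next
    fix b1 b2 assume b: "lvars b1 \<subseteq> X" "lvars b2 \<subseteq> X"
      and "b1 \<in> {u. \<forall>w'\<in>{w}. LBr w' u \<in> I}" "b2 \<in> {u. \<forall>w'\<in>{w}. LBr w' u \<in> I}"
    then have "LBr w b1 \<in> I" "LBr w b2 \<in> I" by auto
    then have "LAdd (LBr (LBr w b1) b2) (LBr b1 (LBr w b2)) \<in> I"
      using ad_stable_br_right[OF I b(2)] ad_stable_br_left[OF I b(1)]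
      by (intro cong_subspace_LAdd[OF I'])
    then show "LBr b1 b2 \<in> {u. \<forall>w'\<in>{w}. LBr w' u \<in> I}"
      using cong_subspace_cong[OF I' lie_cong_br_leibniz] by simp
  qed
  then show ?thesis by simp
qed

lemma brspan_subset_ad_stable:
  assumes I: "ad_stable R X I"
    and gen: "\<And>x y. x \<in> X \<Longrightarrow> y \<in> X \<Longrightarrow> LBr (LV x) (LV y) \<in> I"
  shows "brspan X \<subseteq> I"
proof -
  note I' = ad_stable_cong_subspace[OF I]
  have "LBr a b \<in> I" if "lvars a \<subseteq> X" "lvars b \<subseteq> X" for a b
  proof -
    have "a \<in> {u. \<forall>w\<in>{b}. LBr u w \<in> I}"
      using \<open>lvars a \<subseteq> X\<close>
    proof (rule term_subspace_induct)
      show "term_subspace {u. \<forall>w\<in>{b}. LBr u w \<in> I}"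
        using I' by (intro term_subspace_if_cong_subspace cong_subspace_br_left_preimage)
    next
      fix y assume "y \<in> X"
      then show "LV y \<in> {u. \<forall>w\<in>{b}. LBr u w \<in> I}"
        using br_right_mem_of_generators[OF I gen] \<open>lvars b \<subseteq> X\<close> by blast
    next
      fix a1 a2 assume a: "lvars a1 \<subseteq> X" "lvars a2 \<subseteq> X"
        and "a1 \<in> {u. \<forall>w\<in>{b}. LBr u w \<in> I}" "a2 \<in> {u. \<forall>w\<in>{b}. LBr u w \<in> I}"
      then have "LBr a1 b \<in> I" "LBr a2 b \<in> I" by auto
      then have "LAdd (LBr a1 (LBr a2 b)) (LSmul (-1) (LBr a2 (LBr a1 b))) \<in> I"
        using ad_stable_br_left[OF I a(1)] ad_stable_br_left[OF I a(2)]
        by (intro cong_subspace_diff[OF I'])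
      then show "LBr a1 a2 \<in> {u. \<forall>w\<in>{b}. LBr u w \<in> I}"
        using cong_subspace_cong[OF I' lie_cong_br_br_left] by simp
    qed
    then show ?thesis by simp
  qed
  then show ?thesis
    by (intro brspan_subset term_subspace_if_cong_subspace[OF I'])
qed

lemma cong_subspace_zero_class: "cong_subspace R {t. lie_cong R t LZero}"
  unfolding cong_subspace_def term_subspace_def
  by (auto intro: lie_cong.refl lie_cong.trans lie_cong_LAdd_LZeroI lie_cong_LSmul_LZeroI)

lemma brspan_LZero_if_commuting:
  assumes comm: "\<And>a b. a \<in> V \<Longrightarrow> b \<in> V \<Longrightarrow> a \<noteq> b \<Longrightarrow> lie_cong R (LBr (LV a) (LV b)) LZero"
    and "t \<in> brspan V"
  shows "lie_cong R t LZero"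
proof -
  have "ad_stable R V {t. lie_cong R t LZero}"
    unfolding ad_stable_def using cong_subspace_zero_class lie_cong_LBr_LZeroI_right by blast
  moreover have "LBr (LV a) (LV b) \<in> {t. lie_cong R t LZero}" if "a \<in> V" "b \<in> V" for a b
    using comm[OF that] lie_cong.br_alt by (cases "a = b") auto
  ultimately have "brspan V \<subseteq> {t. lie_cong R t LZero}"
    by (rule brspan_subset_ad_stable)
  then show ?thesis using \<open>t \<in> brspan V\<close> by blast
qed

definition cong_subalgebra :: "('k::field, 'x) lterm set \<Rightarrow> 'x set \<Rightarrow> ('k, 'x) lterm set" where
  "cong_subalgebra R V = cong_closure R {t. lvars t \<subseteq> V}"

lemma cong_subalgebraI: "lie_cong R t s \<Longrightarrow> lvars s \<subseteq> V \<Longrightarrow> t \<in> cong_subalgebra R V"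
  unfolding cong_subalgebra_def by (auto intro: cong_closureI)

lemma cong_subalgebra_lvars: "lvars t \<subseteq> V \<Longrightarrow> t \<in> cong_subalgebra R V"
  by (rule cong_subalgebraI[OF lie_cong.refl])

lemma cong_subalgebraE:
  "t \<in> cong_subalgebra R V \<Longrightarrow> (\<And>s. lvars s \<subseteq> V \<Longrightarrow> lie_cong R t s \<Longrightarrow> P) \<Longrightarrow> P"
  unfolding cong_subalgebra_def by (auto elim: cong_closureE)

lemma cong_subspace_cong_subalgebra: "cong_subspace R (cong_subalgebra R V)"
  unfolding cong_subalgebra_def by (rule cong_subspace_cong_closure[OF term_subspace_lvars])

lemma ad_stable_cong_subalgebra: "ad_stable R V (cong_subalgebra R V)"
proof (rule ad_stableI[OF cong_subspace_cong_subalgebra])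
  fix x c assume "x \<in> V" "c \<in> cong_subalgebra R V"
  then show "LBr (LV x) c \<in> cong_subalgebra R V"
    by (elim cong_subalgebraE, intro cong_subalgebraI[where s = "LBr (LV x) s" for s])
      (auto intro: lie_cong.cong_br lie_cong.refl)
qed

definition fixed_mod ::
    "('k::field, 'x) lterm set \<Rightarrow> ('k, 'x) lterm set \<Rightarrow> (('k, 'x) lterm \<Rightarrow> ('k, 'x) lterm)
      \<Rightarrow> ('k, 'x) lterm set" where
  "fixed_mod R I f = {q. \<exists>n\<in>I. lie_cong R q (LAdd (f q) n)}"

lemma term_subspace_fixed_mod:
  assumes I: "cong_subspace R I"
    and zero: "lie_cong R (f LZero) LZero"
    and add: "\<And>a b. lie_cong R (f (LAdd a b)) (LAdd (f a) (f b))"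
    and smul: "\<And>c a. lie_cong R (f (LSmul c a)) (LSmul c (f a))"
  shows "term_subspace (fixed_mod R I f)"
  unfolding term_subspace_def
proof (intro conjI ballI allI impI)
  have "lie_cong R LZero (LAdd (f LZero) LZero)"
    using zero by (meson lie_cong.add_zero lie_cong.cong_add lie_cong.refl lie_cong.sym lie_cong.trans)
  then show "LZero \<in> fixed_mod R I f"
    unfolding fixed_mod_def using cong_subspace_LZero[OF I] by blast
next
  fix a b assume "a \<in> fixed_mod R I f" "b \<in> fixed_mod R I f"
  then obtain na nb where n: "na \<in> I" "nb \<in> I"
    "lie_cong R a (LAdd (f a) na)" "lie_cong R b (LAdd (f b) nb)"
    unfolding fixed_mod_def by blast
  have "lie_cong R (LAdd a b) (LAdd (LAdd (f a) na) (LAdd (f b) nb))"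
    by (rule lie_cong.cong_add[OF n(3,4)])
  also have "lie_cong R \<dots> (LAdd (LAdd (f a) (f b)) (LAdd na nb))"
    by (rule lie_cong_add_add_swap)
  also have "lie_cong R \<dots> (LAdd (f (LAdd a b)) (LAdd na nb))"
    by (rule lie_cong.cong_add[OF lie_cong.sym[OF add] lie_cong.refl])
  finally show "LAdd a b \<in> fixed_mod R I f"
    unfolding fixed_mod_def using cong_subspace_LAdd[OF I n(1,2)] by blast
next
  fix c a assume "a \<in> fixed_mod R I f"
  then obtain n where n: "n \<in> I" "lie_cong R a (LAdd (f a) n)"
    unfolding fixed_mod_def by blast
  have "lie_cong R (LSmul c a) (LAdd (LSmul c (f a)) (LSmul c n))"
    using lie_cong.cong_smul[OF n(2)] lie_cong.smul_add by (rule lie_cong.trans)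
  also have "lie_cong R \<dots> (LAdd (f (LSmul c a)) (LSmul c n))"
    by (rule lie_cong.cong_add[OF lie_cong.sym[OF smul] lie_cong.refl])
  finally show "LSmul c a \<in> fixed_mod R I f"
    unfolding fixed_mod_def using cong_subspace_LSmul[OF I n(1)] by blast
qed

lemma cong_subspace_fixed_mod:
  assumes I: "cong_subspace R I"
    and "lie_cong R (f LZero) LZero"
    and "\<And>a b. lie_cong R (f (LAdd a b)) (LAdd (f a) (f b))"
    and "\<And>c a. lie_cong R (f (LSmul c a)) (LSmul c (f a))"
    and f_cong: "\<And>a b. lie_cong R a b \<Longrightarrow> lie_cong R (f a) (f b)"
  shows "cong_subspace R (fixed_mod R I f)"
  unfolding cong_subspace_def
proof (intro conjI allI impI)
  show "term_subspace (fixed_mod R I f)"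
    by (rule term_subspace_fixed_mod) fact+
  fix a b assume ab: "lie_cong R a b" and "b \<in> fixed_mod R I f"
  then obtain n where n: "n \<in> I" "lie_cong R b (LAdd (f b) n)"
    unfolding fixed_mod_def by blast
  have "lie_cong R a (LAdd (f b) n)"
    using ab n(2) by (rule lie_cong.trans)
  also have "lie_cong R \<dots> (LAdd (f a) n)"
    by (rule lie_cong.cong_add[OF lie_cong.sym[OF f_cong[OF ab]] lie_cong.refl])
  finally show "a \<in> fixed_mod R I f"
    unfolding fixed_mod_def using n(1) by blast
qed

lemma LBr_mem_fixed_mod_killout:
  assumes I: "ad_stable R X I" and X: "lvars t1 \<subseteq> X" "lvars t2 \<subseteq> X"
    and "t1 \<in> fixed_mod R I (killout S)" "t2 \<in> fixed_mod R I (killout S)"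
  shows "LBr t1 t2 \<in> fixed_mod R I (killout S)"
proof -
  obtain n1 n2 where n: "n1 \<in> I" "n2 \<in> I"
    "lie_cong R t1 (LAdd (killout S t1) n1)" "lie_cong R t2 (LAdd (killout S t2) n2)"
    using assms(4,5) unfolding fixed_mod_def by blast
  define k1 k2 where "k1 = killout S t1" and "k2 = killout S t2"
  have k1: "lvars k1 \<subseteq> X" using lvars_killout[of S t1] X unfolding k1_def by auto
  have "lie_cong R (LBr t1 t2) (LAdd (LBr k1 t2) (LBr n1 t2))"
    unfolding k1_def using lie_cong.cong_br[OF n(3) lie_cong.refl] lie_cong.br_add_left
    by (rule lie_cong.trans)
  also have "lie_cong R \<dots> (LAdd (LAdd (LBr k1 k2) (LBr k1 n2)) (LBr n1 t2))"
    unfolding k2_def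
    using lie_cong.cong_br[OF lie_cong.refl n(4)] lie_cong.br_add_right
    by (intro lie_cong.cong_add lie_cong.refl) (rule lie_cong.trans)
  also have "lie_cong R \<dots> (LAdd (LBr k1 k2) (LAdd (LBr k1 n2) (LBr n1 t2)))"
    by (rule lie_cong.add_assoc)
  finally have "lie_cong R (LBr t1 t2) (LAdd (killout S (LBr t1 t2)) (LAdd (LBr k1 n2) (LBr n1 t2)))"
    by (simp add: k1_def k2_def)
  moreover have "LAdd (LBr k1 n2) (LBr n1 t2) \<in> I"
    using ad_stable_br_left[OF I k1 n(2)] ad_stable_br_right[OF I X(2) n(1)]
    by (rule cong_subspace_LAdd[OF ad_stable_cong_subspace[OF I]])
  ultimately show ?thesis
    unfolding fixed_mod_def by blast
qed

lemma killout_fixed_mod: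
  assumes I: "ad_stable R X I" and out: "\<And>x. x \<in> X - S \<Longrightarrow> LV x \<in> I"
    and "lvars t \<subseteq> X"
  shows "t \<in> fixed_mod R I (killout S)"
  using \<open>lvars t \<subseteq> X\<close>
proof (rule term_subspace_induct)
  show "term_subspace (fixed_mod R I (killout S))"
    by (rule term_subspace_fixed_mod[OF ad_stable_cong_subspace[OF I]]) (simp_all add: lie_cong.refl)
next
  fix x assume "x \<in> X"
  show "LV x \<in> fixed_mod R I (killout S)"
  proof (cases "x \<in> S")
    case True
    then show ?thesis
      unfolding fixed_mod_def
      using cong_subspace_LZero[OF ad_stable_cong_subspace[OF I]] lie_cong.sym[OF lie_cong.add_zero]
      by auto
  next
    case False
    then show ?thesis
      unfolding fixed_mod_def using out \<open>x \<in> X\<close> lie_cong.sym[OF lie_cong_LZero_add] by auto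
  qed
next
  fix t1 t2 assume "lvars t1 \<subseteq> X" "lvars t2 \<subseteq> X"
    "t1 \<in> fixed_mod R I (killout S)" "t2 \<in> fixed_mod R I (killout S)"
  then show "LBr t1 t2 \<in> fixed_mod R I (killout S)"
    by (rule LBr_mem_fixed_mod_killout[OF I])
qed

fun term_sum :: "(nat \<Rightarrow> ('k, 'x) lterm) \<Rightarrow> nat \<Rightarrow> ('k, 'x) lterm" where
  "term_sum f 0 = LZero"
| "term_sum f (Suc m) = LAdd (term_sum f m) (f m)"

lemma term_sum_cong:
  "(\<And>j. j < m \<Longrightarrow> lie_cong R (f j) (g j)) \<Longrightarrow> lie_cong R (term_sum f m) (term_sum g m)"
  by (induction m) (auto intro: lie_cong.refl lie_cong.cong_add)

lemma term_sum_LZero: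
  "(\<And>j. j < m \<Longrightarrow> lie_cong R (f j) LZero) \<Longrightarrow> lie_cong R (term_sum f m) LZero"
  by (induction m) (auto intro: lie_cong.refl lie_cong_LAdd_LZeroI)

lemma term_sum_add:
  "lie_cong R (term_sum (\<lambda>j. LAdd (f j) (g j)) m) (LAdd (term_sum f m) (term_sum g m))"
proof (induction m)
  case 0
  show ?case by (simp add: lie_cong.sym[OF lie_cong.add_zero])
next
  case (Suc m)
  have "lie_cong R (term_sum (\<lambda>j. LAdd (f j) (g j)) (Suc m))
      (LAdd (LAdd (term_sum f m) (term_sum g m)) (LAdd (f m) (g m)))"
    using Suc by (simp add: lie_cong.cong_add lie_cong.refl)
  also have "lie_cong R \<dots> (LAdd (term_sum f (Suc m)) (term_sum g (Suc m)))"
    by (simp add: lie_cong_add_add_swap)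
  finally show ?case .
qed

lemma term_sum_smul: "lie_cong R (term_sum (\<lambda>j. LSmul c (f j)) m) (LSmul c (term_sum f m))"
proof (induction m)
  case 0
  show ?case
    using lie_cong.sym[OF lie_cong_LSmul_LZeroI[OF lie_cong.refl[of R LZero]]] by simp
next
  case (Suc m)
  have "lie_cong R (term_sum (\<lambda>j. LSmul c (f j)) (Suc m))
      (LAdd (LSmul c (term_sum f m)) (LSmul c (f m)))"
    using Suc by (simp add: lie_cong.cong_add lie_cong.refl)
  also have "lie_cong R \<dots> (LSmul c (term_sum f (Suc m)))"
    by (simp add: lie_cong.sym[OF lie_cong.smul_add])
  finally show ?case .
qed

lemma term_sum_single:
  "i < m \<Longrightarrow> (\<And>j. j < m \<Longrightarrow> j \<noteq> i \<Longrightarrow> lie_cong R (f j) LZero) \<Longrightarrow>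
    lie_cong R (term_sum f m) (f i)"
proof (induction m)
  case 0
  then show ?case by simp
next
  case (Suc m)
  show ?case
  proof (cases "i = m")
    case True
    have "lie_cong R (term_sum f m) LZero"
      by (rule term_sum_LZero) (use Suc.prems True in auto)
    then have "lie_cong R (term_sum f (Suc m)) (LAdd LZero (f i))"
      using True by (simp add: lie_cong.cong_add lie_cong.refl)
    then show ?thesis using lie_cong_LZero_add by (rule lie_cong.trans)
  next
    case False
    then have "lie_cong R (term_sum f (Suc m)) (LAdd (f i) LZero)"
      using Suc by (simp add: lie_cong.cong_add)
    then show ?thesis using lie_cong.add_zero by (rule lie_cong.trans)
  qed
qed

lemma ideal_gen_LZero_iff:
  assumes "\<And>g. g \<in> G \<Longrightarrow> lvars g \<subseteq> X"
  shows "(\<forall>t\<in>ideal_gen R X G. lie_cong R t LZero) \<longleftrightarrow> (\<forall>g\<in>G. lie_cong R g LZero)"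
proof
  assume "\<forall>t\<in>ideal_gen R X G. lie_cong R t LZero"
  moreover have "G \<subseteq> ideal_gen R X G"
    using assms unfolding ideal_gen_def by (blast intro: idspan.intros(1) lie_cong.refl)
  ultimately show "\<forall>g\<in>G. lie_cong R g LZero" by blast
next
  assume "\<forall>g\<in>G. lie_cong R g LZero"
  then show "\<forall>t\<in>ideal_gen R X G. lie_cong R t LZero"
    unfolding ideal_gen_def by (blast intro: idspan_LZero lie_cong.trans)
qed

section \<open>The projection onto a closed subfamily\<close>

lemma pres_rels_cases:
  assumes "r \<in> pres_rels X \<B> RA"
  obtains (local) B where "B \<in> \<B>" "r \<in> RA B"
  | (commutator) x y where "r = LBr (LV x) (LV y)" "x \<in> X" "y \<in> X" "\<forall>B\<in>\<B>. \<not> {x, y} \<subseteq> B"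
  using assms unfolding pres_rels_def by blast

lemma pres_rels_commutator:
  "x \<in> X \<Longrightarrow> y \<in> X \<Longrightarrow> \<forall>B\<in>\<B>. \<not> {x, y} \<subseteq> B \<Longrightarrow> LBr (LV x) (LV y) \<in> pres_rels X \<B> RA"
  unfolding pres_rels_def by blast

locale closed_subfamily =
  fixes E :: "'x set" and AA :: "'x set set"
    and RA :: "'x set \<Rightarrow> ('k::field, 'x) lterm set" and BB :: "'x set set"
  assumes arrangement: "set_arrangement E AA"
    and local_rels_derived: "\<forall>A\<in>AA. RA A \<subseteq> derived {} A"
    and closed: "closed_in_arr BB AA"
begin

text \<open>\<open>rels\<close> presents \<open>L\<close>, \<open>rels_B\<close> presents \<open>L\<^sub>B\<close>, and \<open>killout SB\<close> induces
  \<open>\<pi>\<^sub>B\<close>.\<close>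

abbreviation "SB \<equiv> supp BB"
abbreviation "rels \<equiv> pres_rels E AA RA"
abbreviation "rels_B \<equiv> pres_rels SB BB RA"

lemma member_subset: "A \<in> AA \<Longrightarrow> A \<subseteq> E"
  using arrangement unfolding set_arrangement_def by blast

lemma member_finite: "A \<in> AA \<Longrightarrow> finite A"
  using arrangement unfolding set_arrangement_def by (metis card.infinite not_numeral_le_zero)

lemma subfamily: "BB \<subseteq> AA"
  using closed unfolding closed_in_arr_def by blast

lemma member_subset_supp: "A \<in> BB \<Longrightarrow> A \<subseteq> SB"
  unfolding supp_def by blast

lemma supp_subset: "SB \<subseteq> E"
  unfolding supp_def using subfamily member_subset by blast

lemma eq_if_outside_member_meets_supp:
  assumes "A \<in> AA" "A \<notin> BB" "y \<in> A \<inter> SB" "z \<in> A \<inter> SB"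
  shows "y = z"
proof -
  have "card (A \<inter> SB) \<le> 1"
    using closed assms(1,2) unfolding closed_in_arr_def by blast
  with member_finite[OF assms(1)] assms(3,4) show ?thesis
    using card_le_Suc0_iff_eq[of "A \<inter> SB"] by auto
qed

lemma local_rel_derived:
  "A \<in> AA \<Longrightarrow> r \<in> RA A \<Longrightarrow> lvars r \<subseteq> A \<and> (\<exists>b\<in>brspan A. lie_cong {} r b)"
  using local_rels_derived unfolding derived_def by blast

lemma local_rel_mem_rels: "A \<in> AA \<Longrightarrow> r \<in> RA A \<Longrightarrow> r \<in> rels"
  unfolding pres_rels_def by blast

lemma rels_B_hold:
  assumes "r \<in> rels_B"
  shows "lie_cong rels r LZero"
  using assms
proof (cases rule: pres_rels_cases)
  case (local B)
  then show ?thesis using subfamily by (blast intro: lie_cong.rel local_rel_mem_rels)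
next
  case (commutator x y)
  note r = commutator(1) and xy = commutator(2,3) and not_in_B = commutator(4)
  show ?thesis
  proof (cases "x = y")
    case True
    then show ?thesis using r by (simp add: lie_cong.br_alt)
  next
    case False
    have "\<not> {x, y} \<subseteq> A" if "A \<in> AA" for A
      using eq_if_outside_member_meets_supp[OF that] not_in_B xy False by blast
    then show ?thesis
      using r xy supp_subset by (blast intro: lie_cong.rel pres_rels_commutator)
  qed
qed

lemma lie_cong_rels_B_imp_rels: "lie_cong rels_B a b \<Longrightarrow> lie_cong rels a b"
  by (rule lie_cong_mono[OF rels_B_hold])

lemma killout_rels:
  assumes "r \<in> rels"
  shows "lie_cong rels_B (killout SB r) LZero"
  using assms
proof (cases rule: pres_rels_cases)
  case (local A)
  note A = local
  show ?thesis
  proof (cases "A \<in> BB")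
    case True
    then have "killout SB r = r"
      using local_rel_derived[OF A] member_subset_supp by (blast intro: killout_id)
    moreover have "r \<in> rels_B" using True A unfolding pres_rels_def by blast
    ultimately show ?thesis by (simp add: lie_cong.rel)
  next
    case False
    obtain b where b: "b \<in> brspan A" "lie_cong {} r b" using local_rel_derived[OF A] by blast
    have "lie_cong rels_B (killout SB r) (killout SB b)"
      by (rule killout_lie_cong[OF _ b(2)]) simp
    also have "lie_cong rels_B (killout SB b) LZero"
      using eq_if_outside_member_meets_supp[OF A(1) False]
      by (blast intro: brspan_LZero_if_commuting killout_brspan[OF b(1)])
    finally show ?thesis .
  qed
next
  case (commutator x y)
  note r = commutator(1)
  from commutator have "x \<in> SB \<Longrightarrow> y \<in> SB \<Longrightarrow> r \<in> rels_B"
    using subfamily unfolding pres_rels_def by blast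
  then show ?thesis
    using r by (auto intro: lie_cong.rel lie_cong_LBr_LZeroI_left lie_cong_LBr_LZeroI_right
        lie_cong.refl)
qed

lemma killout_lie_cong_rels: "lie_cong rels a b \<Longrightarrow> lie_cong rels_B (killout SB a) (killout SB b)"
  by (rule killout_lie_cong[OF killout_rels])

context
  assumes replacement: "replacement AA RA"
begin

text \<open>This is the one place where replacement is used.\<close>

lemma br_outside_supp_mem_subalgebra:
  assumes x: "x \<in> E - SB" and y: "y \<in> SB"
  shows "LBr (LV x) (LV y) \<in> cong_subalgebra rels (E - SB)"
proof (cases "\<exists>A\<in>AA. {x, y} \<subseteq> A")
  case True
  then obtain A where A: "A \<in> AA" "x \<in> A" "y \<in> A" by auto
  have A_not_B: "A \<notin> BB"
    using A(2) x member_subset_supp[of A] by auto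
  obtain B where B: "B \<in> BB" "y \<in> B" using y unfolding supp_def by auto
  then have "B \<in> AA" "B \<noteq> A" using subfamily A_not_B by auto
  then have "\<exists>B\<in>AA. B \<noteq> A \<and> y \<in> B" using B(2) by blast
  then have "derived (RA A) A \<subseteq> subalg_gen (RA A) A (A - {y})"
    using replacement A(1,3) unfolding replacement_def by simp
  moreover have "LBr (LV x) (LV y) \<in> derived (RA A) A"
    using A lie_cong.refl brspan.intros(1)[of "LV x" A "LV y"] unfolding derived_def by auto
  ultimately obtain s where s: "lvars s \<subseteq> A - {y}" "lie_cong (RA A) (LBr (LV x) (LV y)) s"
    unfolding subalg_gen_def by auto
  have "lie_cong rels r LZero" if "r \<in> RA A" for r
    using A(1) that by (intro lie_cong.rel local_rel_mem_rels)
  then have "lie_cong rels (LBr (LV x) (LV y)) s"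
    using s(2) by (rule lie_cong_mono)
  moreover have "lvars s \<subseteq> E - SB"
  proof
    fix a assume "a \<in> lvars s"
    then have "a \<in> A" "a \<noteq> y" using s(1) by auto
    then show "a \<in> E - SB"
      using member_subset[OF A(1)] eq_if_outside_member_meets_supp[OF A(1) A_not_B, of a y] A(3) y
      by blast
  qed
  ultimately show ?thesis by (rule cong_subalgebraI)
next
  case False
  then have "LBr (LV x) (LV y) \<in> rels"
    using x y supp_subset by (intro pres_rels_commutator) auto
  then show ?thesis
    by (intro cong_subspace_cong_LZero[OF cong_subspace_cong_subalgebra] lie_cong.rel)
qed

lemma ad_stable_subalgebra_outside_supp: "ad_stable rels E (cong_subalgebra rels (E - SB))"
proof (rule ad_stableI[OF cong_subspace_cong_subalgebra])
  fix x c assume x: "x \<in> E" and c: "c \<in> cong_subalgebra rels (E - SB)"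
  obtain s where s: "lvars s \<subseteq> E - SB" "lie_cong rels c s"
    using c by (rule cong_subalgebraE)
  have "LBr (LV x) s \<in> cong_subalgebra rels (E - SB)"
  proof (cases "x \<in> SB")
    case True
    show ?thesis
    proof (rule br_right_mem_of_generators[OF ad_stable_cong_subalgebra _ s(1)])
      fix z assume "z \<in> E - SB"
      then show "LBr (LV x) (LV z) \<in> cong_subalgebra rels (E - SB)"
        using True by (rule cong_subspace_br_antisym[OF cong_subspace_cong_subalgebra
              br_outside_supp_mem_subalgebra])
    qed
  next
    case False
    then show ?thesis using x s(1) by (intro cong_subalgebra_lvars) auto
  qed
  then show "LBr (LV x) c \<in> cong_subalgebra rels (E - SB)"
    by (rule cong_subspace_cong[OF cong_subspace_cong_subalgebra
          lie_cong.cong_br[OF lie_cong.refl s(2)]])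
qed

lemma proj_kernel_eq_subalg_gen: "proj_kernel E RA BB = subalg_gen rels E (E - SB)"
proof (intro equalityI subsetI)
  fix t assume "t \<in> proj_kernel E RA BB"
  then have t: "lvars t \<subseteq> E" "lie_cong rels (killout SB t) LZero"
    unfolding proj_kernel_def by (auto intro: lie_cong_rels_B_imp_rels)
  obtain n where n: "n \<in> cong_subalgebra rels (E - SB)" "lie_cong rels t (LAdd (killout SB t) n)"
    using killout_fixed_mod[OF ad_stable_subalgebra_outside_supp cong_subalgebra_lvars t(1)]
    unfolding fixed_mod_def by auto
  obtain s where s: "lvars s \<subseteq> E - SB" "lie_cong rels n s"
    using n(1) by (rule cong_subalgebraE)
  have "lie_cong rels t (LAdd LZero n)"
    using n(2) lie_cong.cong_add[OF t(2) lie_cong.refl] by (rule lie_cong.trans)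
  also have "lie_cong rels \<dots> s"
    using lie_cong_LZero_add s(2) by (rule lie_cong.trans)
  finally show "t \<in> subalg_gen rels E (E - SB)"
    unfolding subalg_gen_def using t(1) s(1) by auto
next
  fix t assume "t \<in> subalg_gen rels E (E - SB)"
  then obtain s where t: "lvars t \<subseteq> E" "lvars s \<subseteq> E - SB" "lie_cong rels t s"
    unfolding subalg_gen_def by auto
  have "lie_cong rels_B (killout SB t) (killout SB s)"
    by (rule killout_lie_cong_rels[OF t(3)])
  also have "lie_cong rels_B \<dots> LZero"
    by (rule killout_LZero_if_disjoint) (use t(2) in auto)
  finally show "t \<in> proj_kernel E RA BB"
    unfolding proj_kernel_def using t(1) by auto
qed

end

end

section \<open>Partitions into closed subfamilies\<close>

locale closed_partition =
  fixes E :: "'x set" and AA :: "'x set set"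
    and RA :: "'x set \<Rightarrow> ('k::field, 'x) lterm set"
    and k :: nat and BB :: "nat \<Rightarrow> 'x set set"
  assumes arrangement: "set_arrangement E AA"
    and local_rels_derived: "\<forall>A\<in>AA. RA A \<subseteq> derived {} A"
    and replacement: "replacement AA RA"
    and closed: "\<forall>i<k. closed_in_arr (BB i) AA"
    and disjoint: "\<forall>i<k. \<forall>j<k. i \<noteq> j \<longrightarrow> BB i \<inter> BB j = {}"
    and cover: "(\<Union>i<k. BB i) = AA"
begin

abbreviation "S i \<equiv> supp (BB i)"
abbreviation "rels \<equiv> pres_rels E AA RA"
abbreviation "rels_B i \<equiv> pres_rels (S i) (BB i) RA"

abbreviation "cross_triples \<equiv> {LBr (LV x) (LBr (LV y) (LV z)) | x y z i.
  i < k \<and> y \<in> supp (BB i) \<and> z \<in> supp (BB i) \<and> x \<in> E - supp (BB i)}"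

lemma closed_subfamily: "i < k \<Longrightarrow> closed_subfamily E AA RA (BB i)"
  using arrangement local_rels_derived closed by (simp add: closed_subfamily_def)

lemma killout_lie_cong_rels:
  "i < k \<Longrightarrow> lie_cong rels a b \<Longrightarrow> lie_cong (rels_B i) (killout (S i) a) (killout (S i) b)"
  by (rule closed_subfamily.killout_lie_cong_rels[OF closed_subfamily])

lemma lie_cong_rels_B_imp_rels: "i < k \<Longrightarrow> lie_cong (rels_B i) a b \<Longrightarrow> lie_cong rels a b"
  by (rule closed_subfamily.lie_cong_rels_B_imp_rels[OF closed_subfamily])

lemma supp_subset: "i < k \<Longrightarrow> S i \<subseteq> E"
  by (rule closed_subfamily.supp_subset[OF closed_subfamily])

lemma supp_inter_commutator_rel:
  assumes i: "i < k" and j: "j < k" "i \<noteq> j"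
    and yz: "y \<in> S i \<inter> S j" "z \<in> S i \<inter> S j" "y \<noteq> z"
  shows "LBr (LV y) (LV z) \<in> rels_B j"
proof -
  interpret Bi: closed_subfamily E AA RA "BB i" by (rule closed_subfamily[OF i])
  interpret Bj: closed_subfamily E AA RA "BB j" by (rule closed_subfamily[OF j(1)])
  have "\<not> {y, z} \<subseteq> D" if "D \<in> BB j" for D
  proof
    assume "{y, z} \<subseteq> D"
    moreover have "D \<in> AA" "D \<notin> BB i"
      using that Bj.subfamily disjoint i j by auto
    ultimately show False
      using Bi.eq_if_outside_member_meets_supp[of D y z] yz by auto
  qed
  then show ?thesis
    using yz unfolding pres_rels_def by auto
qed

lemma killout_brspan_other:
  assumes "i < k" "j < k" "i \<noteq> j" and "p \<in> brspan (S i)"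
  shows "lie_cong (rels_B j) (killout (S j) p) LZero"
proof (rule brspan_LZero_if_commuting)
  show "killout (S j) p \<in> brspan (S i \<inter> S j)"
    by (rule killout_brspan[OF assms(4)])
  fix y z assume "y \<in> S i \<inter> S j" "z \<in> S i \<inter> S j" "y \<noteq> z"
  then show "lie_cong (rels_B j) (LBr (LV y) (LV z)) LZero"
    by (intro lie_cong.rel supp_inter_commutator_rel[OF assms(1-3)])
qed

lemma killout_cross_triple:
  assumes j: "j < k" and "g \<in> cross_triples"
  shows "lie_cong (rels_B j) (killout (S j) g) LZero"
proof -
  obtain x y z i where g: "g = LBr (LV x) (LBr (LV y) (LV z))" and i: "i < k"
    and yz: "y \<in> S i" "z \<in> S i" and x: "x \<notin> S i"
    using assms(2) by blast
  show ?thesis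
  proof (cases "x \<in> S j")
    case False
    then show ?thesis
      unfolding g by (simp add: lie_cong_LBr_LZeroI_left lie_cong.refl)
  next
    case True
    have "LBr (LV y) (LV z) \<in> brspan (S i)"
      using yz by (simp add: brspan.intros(1))
    moreover have "i \<noteq> j" using True x by auto
    ultimately have "lie_cong (rels_B j) (killout (S j) (LBr (LV y) (LV z))) LZero"
      using i j by (intro killout_brspan_other)
    then show ?thesis
      unfolding g by (simp add: lie_cong_LBr_LZeroI_right)
  qed
qed

lemma killout_idspan_cross_triples:
  assumes "j < k" and "n \<in> idspan E cross_triples"
  shows "lie_cong (rels_B j) (killout (S j) n) LZero"
  using killout_idspan[OF assms(2)]
  by (rule idspan_LZero[rotated]) (use killout_cross_triple[OF assms(1)] in blast)

lemma cross_triples_subset_brspan: "cross_triples \<subseteq> brspan E"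
proof
  fix g assume "g \<in> cross_triples"
  then obtain x y z i where "g = LBr (LV x) (LBr (LV y) (LV z))" "i < k"
    "y \<in> S i" "z \<in> S i" "x \<in> E"
    by blast
  then show "g \<in> brspan E"
    using supp_subset by (simp add: brspan.intros(1) subset_iff)
qed

definition cross_ideal :: "('k, 'x) lterm set" where
  "cross_ideal = cong_closure rels (idspan E cross_triples)"

lemma ad_stable_cross_ideal: "ad_stable rels E cross_ideal"
proof (rule ad_stableI)
  show "cong_subspace rels cross_ideal"
    unfolding cross_ideal_def by (rule cong_subspace_cong_closure[OF term_subspace_idspan])
  fix x c assume "x \<in> E" "c \<in> cross_ideal"
  then obtain n where "n \<in> idspan E cross_triples" "lie_cong rels c n"
    unfolding cross_ideal_def by (auto elim: cong_closureE)
  then show "LBr (LV x) c \<in> cross_ideal"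
    unfolding cross_ideal_def using \<open>x \<in> E\<close>
    by (intro cong_closureI[OF lie_cong.cong_br[OF lie_cong.refl]] idspan.intros(5)) auto
qed

lemma cross_triples_subset_cross_ideal: "cross_triples \<subseteq> cross_ideal"
  unfolding cross_ideal_def
  using idspan.intros(1)[of _ cross_triples E] subset_cong_closure by blast

lemma ideal_gen_subset_derived_kernels:
  assumes "t \<in> ideal_gen rels E cross_triples"
  shows "t \<in> derived rels E" "\<forall>j<k. t \<in> proj_kernel E RA (BB j)"
proof -
  obtain s where s: "lvars t \<subseteq> E" "s \<in> idspan E cross_triples" "lie_cong rels t s"
    using assms unfolding ideal_gen_def by auto
  have "s \<in> brspan E"
    using idspan_subset_brspan[OF cross_triples_subset_brspan] s(2) by blast
  then show "t \<in> derived rels E"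
    unfolding derived_def using s by auto
  show "\<forall>j<k. t \<in> proj_kernel E RA (BB j)"
  proof (intro allI impI)
    fix j assume j: "j < k"
    have "lie_cong (rels_B j) (killout (S j) t) (killout (S j) s)"
      by (rule killout_lie_cong_rels[OF j s(3)])
    also have "lie_cong (rels_B j) \<dots> LZero"
      by (rule killout_idspan_cross_triples[OF j s(2)])
    finally show "t \<in> proj_kernel E RA (BB j)"
      unfolding proj_kernel_def using s(1) by auto
  qed
qed

lemma ad_stable_subalgebra_outside_supp:
  "i < k \<Longrightarrow> ad_stable rels E (cong_subalgebra rels (E - S i))"
  by (rule closed_subfamily.ad_stable_subalgebra_outside_supp[OF closed_subfamily replacement])

lemma ad_stable_br_outside_supp_preimage:
  assumes i: "i < k"
  shows "ad_stable rels (S i) {m. \<forall>X\<in>{X. lvars X \<subseteq> E - S i}. LBr X m \<in> cross_ideal}"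
    (is "ad_stable rels (S i) ?P")
proof (rule ad_stableI)
  note I = ad_stable_cross_ideal and I' = ad_stable_cong_subspace[OF ad_stable_cross_ideal]
  show "cong_subspace rels ?P"
    by (rule cong_subspace_br_right_preimage[OF I'])
  fix y m assume y: "y \<in> S i" and m: "m \<in> ?P"
  have "LBr X (LBr (LV y) m) \<in> cross_ideal" if X: "lvars X \<subseteq> E - S i" for X
  proof -
    have "LBr X (LV y) \<in> cong_subalgebra rels (E - S i)"
      using y supp_subset[OF i] X
      by (intro ad_stable_br_right[OF ad_stable_subalgebra_outside_supp[OF i]] cong_subalgebra_lvars)
        auto
    then obtain X' where X': "lvars X' \<subseteq> E - S i" "lie_cong rels (LBr X (LV y)) X'"
      by (rule cong_subalgebraE)
    have "LBr X' m \<in> cross_ideal"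
      using m X'(1) by blast
    then have "LBr (LBr X (LV y)) m \<in> cross_ideal"
      by (rule cong_subspace_cong[OF I' lie_cong.cong_br[OF X'(2) lie_cong.refl]])
    moreover have "LBr (LV y) (LBr X m) \<in> cross_ideal"
    proof (rule ad_stable_br_left[OF I])
      show "lvars (LV y) \<subseteq> E" using y supp_subset[OF i] by auto
      show "LBr X m \<in> cross_ideal" using m X by blast
    qed
    ultimately have "LAdd (LBr (LBr X (LV y)) m) (LBr (LV y) (LBr X m)) \<in> cross_ideal"
      by (rule cong_subspace_LAdd[OF I'])
    then show ?thesis
      by (rule cong_subspace_cong[OF I' lie_cong_br_leibniz])
  qed
  then show "LBr (LV y) m \<in> ?P" by blast
qed

lemma br_outside_supp_commutator_mem_cross_ideal:
  assumes i: "i < k" and "y \<in> S i" "z \<in> S i" and X: "lvars X \<subseteq> E - S i"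
  shows "LBr X (LBr (LV y) (LV z)) \<in> cross_ideal"
proof (rule br_left_mem_of_generators[OF ad_stable_cong_subspace[OF ad_stable_cross_ideal] _ _ X])
  show "LBr (LV y) (LV z) \<in> insert (LBr (LV y) (LV z)) cross_ideal" by simp
  fix x w assume x: "x \<in> E - S i" and "w \<in> insert (LBr (LV y) (LV z)) cross_ideal"
  then consider "w = LBr (LV y) (LV z)" | "w \<in> cross_ideal" by blast
  then show "LBr (LV x) w \<in> cross_ideal"
  proof cases
    case 1
    then show ?thesis
      using x assms(2,3) i cross_triples_subset_cross_ideal by blast
  next
    case 2
    then show ?thesis
      using x by (intro ad_stable_br_left[OF ad_stable_cross_ideal, where c = w]) auto
  qed
qed auto

lemma br_outside_supp_brspan_mem_cross_ideal:
  assumes i: "i < k" and X: "lvars X \<subseteq> E - S i" and p: "p \<in> brspan (S i)"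
  shows "LBr X p \<in> cross_ideal"
proof -
  have "brspan (S i) \<subseteq> {m. \<forall>X\<in>{X. lvars X \<subseteq> E - S i}. LBr X m \<in> cross_ideal}"
    using br_outside_supp_commutator_mem_cross_ideal[OF i]
    by (intro brspan_subset_ad_stable[OF ad_stable_br_outside_supp_preimage[OF i]]) blast
  then show ?thesis
    using p X by blast
qed

text \<open>The preimage of \<open>\<Sum>\<^sub>i L'\<^sub>B\<^sub>i + \<langle>cross triples\<rangle>\<close> in the term algebra.\<close>

definition local_derived_sum :: "('k, 'x) lterm set" where
  "local_derived_sum = cong_closure rels (lspan ((\<Union>i<k. brspan (S i)) \<union> idspan E cross_triples))"

lemma cong_subspace_local_derived_sum: "cong_subspace rels local_derived_sum"
  unfolding local_derived_sum_def by (rule cong_subspace_cong_closure[OF term_subspace_lspan])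

lemma brspan_supp_subset_local_derived_sum:
  assumes "i < k"
  shows "brspan (S i) \<subseteq> local_derived_sum"
proof -
  have "brspan (S i) \<subseteq> lspan ((\<Union>i<k. brspan (S i)) \<union> idspan E cross_triples)"
    using assms by (auto intro: lspan.gen)
  then show ?thesis
    unfolding local_derived_sum_def using subset_cong_closure by (rule order_trans)
qed

lemma cross_ideal_subset_local_derived_sum: "cross_ideal \<subseteq> local_derived_sum"
  unfolding local_derived_sum_def cross_ideal_def
  by (rule cong_closure_mono) (auto intro: lspan.gen)

lemma ad_stable_local_derived_sum: "ad_stable rels E local_derived_sum"
proof (rule ad_stableI[OF cong_subspace_local_derived_sum])
  fix x c assume x: "x \<in> E" and c: "c \<in> local_derived_sum"
  define D where "D = {q. LBr (LV x) q \<in> local_derived_sum}"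
  have "local_derived_sum \<subseteq> D"
    unfolding local_derived_sum_def
  proof (rule cong_closure_lspan_least)
    show "cong_subspace rels D"
      using cong_subspace_br_right_preimage[OF cong_subspace_local_derived_sum, of "{LV x}"]
      unfolding D_def by simp
    show "(\<Union>i<k. brspan (S i)) \<union> idspan E cross_triples \<subseteq> D"
    proof (intro subsetI, elim UnE UN_E)
      fix g :: "('k, 'x) lterm" and i assume "i \<in> {..<k}" and g: "g \<in> brspan (S i)"
      then have i: "i < k" by simp
      show "g \<in> D"
      proof (cases "x \<in> S i")
        case True
        then have "LBr (LV x) g \<in> brspan (S i)"
          using lvars_brspan[OF g] by (simp add: brspan.intros(1))
        then show ?thesis
          unfolding D_def using brspan_supp_subset_local_derived_sum[OF i] by blast
      next
        case False
        then have "LBr (LV x) g \<in> cross_ideal"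
          using x by (intro br_outside_supp_brspan_mem_cross_ideal[OF i _ g]) auto
        then show ?thesis
          unfolding D_def using cross_ideal_subset_local_derived_sum by blast
      qed
    next
      fix g :: "('k, 'x) lterm" assume "g \<in> idspan E cross_triples"
      then have "LBr (LV x) g \<in> cross_ideal"
        unfolding cross_ideal_def using x subset_cong_closure idspan.intros(5)[of "LV x" E g]
        by auto
      then show "g \<in> D"
        unfolding D_def using cross_ideal_subset_local_derived_sum by blast
    qed
  qed
  then show "LBr (LV x) c \<in> local_derived_sum"
    using c unfolding D_def by blast
qed

lemma brspan_subset_local_derived_sum: "brspan E \<subseteq> local_derived_sum"
proof (rule brspan_subset_ad_stable[OF ad_stable_local_derived_sum])
  fix x y assume xy: "x \<in> E" "y \<in> E"
  show "LBr (LV x) (LV y) \<in> local_derived_sum"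
  proof (cases "\<exists>A\<in>AA. {x, y} \<subseteq> A")
    case True
    then obtain A i where "i < k" "A \<in> BB i" "{x, y} \<subseteq> A"
      using cover by blast
    then have "LBr (LV x) (LV y) \<in> brspan (S i)"
      unfolding supp_def by (intro brspan.intros(1)) auto
    then show ?thesis
      using brspan_supp_subset_local_derived_sum[OF \<open>i < k\<close>] by blast
  next
    case False
    then have "LBr (LV x) (LV y) \<in> rels"
      using xy by (intro pres_rels_commutator) auto
    then show ?thesis
      by (rule cong_subspace_cong_LZero[OF cong_subspace_local_derived_sum lie_cong.rel])
  qed
qed

text \<open>\<open>kill_sum\<close> represents \<open>\<Sum>\<^sub>i \<iota>\<^sub>i \<pi>\<^sub>B\<^sub>i\<close>, where the relations of \<open>L\<^sub>B\<^sub>i\<close> hold in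
  \<open>L\<close>, so that \<open>L\<^sub>B\<^sub>i\<close> maps back into \<open>L\<close>.\<close>

definition kill_sum :: "('k, 'x) lterm \<Rightarrow> ('k, 'x) lterm" where
  "kill_sum q = term_sum (\<lambda>j. killout (S j) q) k"

lemma kill_sum_lie_cong: "lie_cong rels a b \<Longrightarrow> lie_cong rels (kill_sum a) (kill_sum b)"
  unfolding kill_sum_def
  by (intro term_sum_cong lie_cong_rels_B_imp_rels[OF _ killout_lie_cong_rels])

lemma kill_sum_LZero_if_kernels:
  "(\<And>j. j < k \<Longrightarrow> lie_cong (rels_B j) (killout (S j) q) LZero) \<Longrightarrow> lie_cong rels (kill_sum q) LZero"
  unfolding kill_sum_def by (intro term_sum_LZero lie_cong_rels_B_imp_rels)

lemma kill_sum_LAdd: "lie_cong R (kill_sum (LAdd a b)) (LAdd (kill_sum a) (kill_sum b))"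
  unfolding kill_sum_def using term_sum_add[of R "\<lambda>j. killout (S j) a" "\<lambda>j. killout (S j) b" k]
  by simp

lemma kill_sum_LSmul: "lie_cong R (kill_sum (LSmul c a)) (LSmul c (kill_sum a))"
  unfolding kill_sum_def using term_sum_smul[of R c "\<lambda>j. killout (S j) a" k] by simp

lemma kill_sum_LZero: "lie_cong rels (kill_sum LZero) LZero"
  by (intro kill_sum_LZero_if_kernels) (simp add: lie_cong.refl)

lemma cong_subspace_fixed_mod_kill_sum: "cong_subspace rels (fixed_mod rels cross_ideal kill_sum)"
  by (rule cong_subspace_fixed_mod[OF ad_stable_cong_subspace[OF ad_stable_cross_ideal]
        kill_sum_LZero kill_sum_LAdd kill_sum_LSmul kill_sum_lie_cong])

lemma local_derived_sum_subset_fixed_mod: "local_derived_sum \<subseteq> fixed_mod rels cross_ideal kill_sum"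
  unfolding local_derived_sum_def
proof (rule cong_closure_lspan_least[OF cong_subspace_fixed_mod_kill_sum], intro subsetI, elim UnE UN_E)
  fix p :: "('k, 'x) lterm" and i assume "i \<in> {..<k}" and p: "p \<in> brspan (S i)"
  then have i: "i < k" by simp
  have "lie_cong rels (kill_sum p) (killout (S i) p)"
    unfolding kill_sum_def
  proof (rule term_sum_single[OF i])
    fix j assume "j < k" "j \<noteq> i"
    then show "lie_cong rels (killout (S j) p) LZero"
      using i by (intro lie_cong_rels_B_imp_rels[OF _ killout_brspan_other[OF _ _ _ p]]) auto
  qed
  also have "killout (S i) p = p"
    by (rule killout_id[OF lvars_brspan[OF p]])
  finally have "lie_cong rels p (LAdd (kill_sum p) LZero)"
    by (meson lie_cong.add_zero lie_cong.sym lie_cong.trans)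
  then show "p \<in> fixed_mod rels cross_ideal kill_sum"
    unfolding fixed_mod_def
    using cong_subspace_LZero[OF ad_stable_cong_subspace[OF ad_stable_cross_ideal]] by blast
next
  fix n :: "('k, 'x) lterm" assume n: "n \<in> idspan E cross_triples"
  have "lie_cong rels (kill_sum n) LZero"
    using n by (intro kill_sum_LZero_if_kernels killout_idspan_cross_triples)
  then have "lie_cong rels n (LAdd (kill_sum n) n)"
    by (meson lie_cong_LZero_add lie_cong.cong_add lie_cong.refl lie_cong.sym lie_cong.trans)
  moreover have "n \<in> cross_ideal"
    unfolding cross_ideal_def using n subset_cong_closure by blast
  ultimately show "n \<in> fixed_mod rels cross_ideal kill_sum"
    unfolding fixed_mod_def by blast
qed

lemma derived_kernels_subset_ideal_gen:
  assumes t: "t \<in> derived rels E" and ker: "\<forall>j<k. t \<in> proj_kernel E RA (BB j)"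
  shows "t \<in> ideal_gen rels E cross_triples"
proof -
  obtain b where b: "lvars t \<subseteq> E" "b \<in> brspan E" "lie_cong rels t b"
    using t unfolding derived_def by auto
  then have "b \<in> fixed_mod rels cross_ideal kill_sum"
    using brspan_subset_local_derived_sum local_derived_sum_subset_fixed_mod by blast
  then obtain n where n: "n \<in> cross_ideal" "lie_cong rels b (LAdd (kill_sum b) n)"
    unfolding fixed_mod_def by blast
  have "lie_cong rels (kill_sum b) (kill_sum t)"
    by (rule kill_sum_lie_cong[OF lie_cong.sym[OF b(3)]])
  also have "lie_cong rels \<dots> LZero"
    using ker unfolding proj_kernel_def by (intro kill_sum_LZero_if_kernels) auto
  finally have "lie_cong rels t (LAdd LZero n)"
    using b(3) n(2) by (meson lie_cong.cong_add lie_cong.refl lie_cong.trans)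
  then have "lie_cong rels t n"
    using lie_cong_LZero_add by (rule lie_cong.trans)
  then show ?thesis
    using n(1) b(1) unfolding cross_ideal_def ideal_gen_def cong_closure_def
    by (auto intro: lie_cong.trans)
qed

lemma derived_kernels_eq_ideal_gen:
  "{t \<in> derived rels E. \<forall>i<k. t \<in> proj_kernel E RA (BB i)} = ideal_gen rels E cross_triples"
  using derived_kernels_subset_ideal_gen ideal_gen_subset_derived_kernels by blast

end

theorem mainTheorem3:
  fixes E :: "'x set" and \<A> :: "'x set set"
    and RA :: "'x set \<Rightarrow> ('k::field, 'x) lterm set"
    and k :: nat and \<B> :: "nat \<Rightarrow> 'x set set"
  assumes "finite E"
    and "set_arrangement E \<A>"
    and "\<forall>A\<in>\<A>. RA A \<subseteq> derived {} A"
    and "replacement \<A> RA"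
    and "\<forall>i<k. closed_in_arr (\<B> i) \<A>"
    and "\<forall>i<k. \<forall>j<k. i \<noteq> j \<longrightarrow> \<B> i \<inter> \<B> j = {}"
    and "(\<Union>i<k. \<B> i) = \<A>"
  defines "R \<equiv> pres_rels E \<A> RA"
    and "J \<equiv> {t \<in> derived (pres_rels E \<A> RA) E. \<forall>i<k. t \<in> proj_kernel E RA (\<B> i)}"
  shows "J = ideal_gen R E {LBr (LV x) (LBr (LV y) (LV z)) | x y z i.
              i < k \<and> y \<in> supp (\<B> i) \<and> z \<in> supp (\<B> i) \<and> x \<in> E - supp (\<B> i)}
    \<and> ((\<forall>t\<in>J. lie_cong R t LZero) \<longleftrightarrow>
        (\<forall>i<k. \<forall>x y z. y \<in> supp (\<B> i) \<and> z \<in> supp (\<B> i) \<and> x \<in> E - supp (\<B> i)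
            \<longrightarrow> lie_cong R (LBr (LV x) (LBr (LV y) (LV z))) LZero))
    \<and> (\<forall>i<k. proj_kernel E RA (\<B> i) = subalg_gen R E (E - supp (\<B> i)))"
proof -
  interpret closed_partition E \<A> RA k \<B>
    by unfold_locales (fact assms)+
  have J: "J = ideal_gen R E cross_triples"
    unfolding J_def R_def by (rule derived_kernels_eq_ideal_gen)
  moreover have "(\<forall>t\<in>J. lie_cong R t LZero) \<longleftrightarrow> (\<forall>g\<in>cross_triples. lie_cong R g LZero)"
    unfolding J using cross_triples_subset_brspan lvars_brspan by (intro ideal_gen_LZero_iff) blast
  moreover have "\<forall>i<k. proj_kernel E RA (\<B> i) = subalg_gen R E (E - supp (\<B> i))"
    unfolding R_def
    using closed_subfamily.proj_kernel_eq_subalg_gen[OF closed_subfamily replacement] by blast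
  ultimately show ?thesis by blast
qed

end
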